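(* The function $T=s^2/c^2$ satisfies the differential equation $\nabla\,(T')^2=4T(1+T)(1+\lambda^2T)$, and neither $T$ nor $t=s/c$ is elliptic (i.e. neither admits an extension from a small disc about $0$ to an elliptic function on $\mathbb{C}$).
   Context: Let $0<\kappa<1$ and $\lambda=\sqrt{1-\kappa^2}\in(0,1)$. Let $F(\tfrac16,\tfrac56;\tfrac12;\cdot)$ denote the Gauss hypergeometric function. Define $u$ as a function of $\phi$ near $0$ by $u=\int_0^{\sin\phi}F(\tfrac16,\tfrac56;\tfrac12;\kappa^2t^2)\,\frac{dt}{\sqrt{1-t^2}}$; near the origin (fixing $0$) this inverts to a holomorphic function $u\mapsto\phi(u)$ with $\phi(0)=0$. Let $\psi$ be the holomorphic function near $0$ with $\psi(0)=0$ and $\sin\psi=\kappa\sin\phi$. Set $s=\sin\phi$, $c=\cos\phi$, $\partial=\cos\tfrac23\psi$, $\nabla=\partial^2$, all as functions of $u$ on a small disc about $0$; primes denote $d/du$. *)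

theory Defs
  imports "HOL-Complex_Analysis.Complex_Analysis"
begin

definition hyp2f1 :: "complex \<Rightarrow> complex \<Rightarrow> complex \<Rightarrow> complex \<Rightarrow> complex" where
  "hyp2f1 a b c z = (\<Sum>n. pochhammer a n * pochhammer b n / (pochhammer c n * fact n) * z ^ n)"

text \<open>Since meromorphic functions in HOL carry arbitrary values
  at poles / removable points, periodicity is required only up to such isolated points.\<close>
definition elliptic_fun :: "(complex \<Rightarrow> complex) \<Rightarrow> bool" where
  "elliptic_fun g \<longleftrightarrow> g meromorphic_on UNIV \<and>
     (\<exists>\<omega>1 \<omega>2. \<omega>1 \<noteq> 0 \<and> Im (\<omega>2 / \<omega>1) \<noteq> 0 \<and>
        (\<forall>z. eventually (\<lambda>w. g (w + \<omega>1) = g w \<and> g (w + \<omega>2) = g w) (at z)))"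

definition extends_to_elliptic :: "(complex \<Rightarrow> complex) \<Rightarrow> bool" where
  "extends_to_elliptic f \<longleftrightarrow> (\<exists>g. elliptic_fun g \<and> eventually (\<lambda>u. g u = f u) (at 0))"

end

theory Submission
  imports Defs
begin

(* The hypergeometric function is elementary here: F(a, 1 - a; 1/2; sin\<^sup>2 z) cos z = cos ((1 - 2a) z),
   since both sides solve y'' = -(1 - 2a)\<^sup>2 y with the same initial values. For a = 1/6 and
   sin \<psi> = \<kappa> sin \<phi>, the integrand at t = sin \<phi> is therefore \<partial> / (cos \<psi> cos \<phi>), so
   \<phi>' = cos \<psi> / \<partial> and T' = 2 s cos \<psi> / (\<partial> c\<^sup>3), and the equation for T follows from
   cos\<^sup>2 \<psi> = 1 - \<kappa>\<^sup>2 s\<^sup>2.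

   Conversely \<partial> is a rational function of T and T', and cos 2\<psi> = 4\<partial>\<^sup>3 - 3\<partial> gives
   9 \<partial>\<^sup>2 \<partial>'\<^sup>2 = 2 (1 - \<partial>\<^sup>2) (4\<partial>\<^sup>3 - 3\<partial> + 1 - 2\<lambda>\<^sup>2). If T extended to an elliptic function,
   so would the nonconstant function \<partial>. A nonconstant elliptic function has a zero (otherwise
   its reciprocal would be an elliptic function without poles, i.e. a bounded entire function),
   and at a zero of \<partial> the equation gives 1 - 2\<lambda>\<^sup>2 = 0; in that case a factor \<partial> cancels and the
   reduced equation gives -6 = 0 there. Finally T = t\<^sup>2, so t does not extend either. *)

section \<open>Gauss hypergeometric series\<close>

definition hyp2f1_fps :: "complex \<Rightarrow> complex \<Rightarrow> complex \<Rightarrow> complex fps" where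
  "hyp2f1_fps a b c = Abs_fps (\<lambda>n. pochhammer a n * pochhammer b n / (pochhammer c n * fact n))"

lemma hyp2f1_eq_eval_fps: "hyp2f1 a b c z = eval_fps (hyp2f1_fps a b c) z"
  by (simp add: hyp2f1_def hyp2f1_fps_def eval_fps_def)

lemma hyp2f1_fps_nth_Suc:
  assumes "c \<notin> \<int>\<^sub>\<le>\<^sub>0"
  shows "(of_nat n + 1) * (c + of_nat n) * fps_nth (hyp2f1_fps a b c) (Suc n) =
    (a + of_nat n) * (b + of_nat n) * fps_nth (hyp2f1_fps a b c) n"
proof -
  define P where "P = pochhammer a n * pochhammer b n"
  define Q where "Q = pochhammer c n * fact n"
  have "c + of_nat n \<noteq> 0" "Q \<noteq> 0"
    using assms by (auto simp: Q_def dest: plus_of_nat_eq_0_imp pochhammer_eq_0_imp_nonpos_Int)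
  moreover have "(of_nat n + 1 :: complex) \<noteq> 0"
    by (metis add.commute of_nat_Suc of_nat_neq_0)
  moreover have "fps_nth (hyp2f1_fps a b c) (Suc n) =
      P * ((a + of_nat n) * (b + of_nat n)) / (Q * ((c + of_nat n) * (of_nat n + 1)))"
    by (simp add: hyp2f1_fps_def P_def Q_def pochhammer_Suc algebra_simps)
  ultimately show ?thesis by (simp add: hyp2f1_fps_def P_def Q_def)
qed

lemma hyp2f1_fps_ode:
  fixes a b c :: complex
  defines "F \<equiv> hyp2f1_fps a b c"
  assumes "c \<notin> \<int>\<^sub>\<le>\<^sub>0"
  shows "fps_X * (1 - fps_X) * fps_deriv (fps_deriv F)
           + (fps_const c - fps_const (a + b + 1) * fps_X) * fps_deriv F = fps_const (a * b) * F"
proof (rule fps_ext)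
  fix m :: nat
  have rec: "(of_nat m + 1) * (c + of_nat m) * fps_nth F (Suc m)
      = (a + of_nat m) * (b + of_nat m) * fps_nth F m"
    unfolding F_def by (rule hyp2f1_fps_nth_Suc[OF assms(2)])
  have expand: "fps_X * (1 - fps_X) * fps_deriv (fps_deriv F)
        + (fps_const c - fps_const (a + b + 1) * fps_X) * fps_deriv F
      = fps_X * fps_deriv (fps_deriv F) - fps_X * (fps_X * fps_deriv (fps_deriv F))
        + fps_const c * fps_deriv F - fps_const (a + b + 1) * (fps_X * fps_deriv F)"
    by (simp add: algebra_simps)
  have nth_X_F2: "fps_nth (fps_X * fps_deriv (fps_deriv F)) m
      = of_nat m * (of_nat m + 1) * fps_nth F (Suc m)"
    by (cases m) (simp_all add: algebra_simps)
  have nth_X2_F2: "fps_nth (fps_X * (fps_X * fps_deriv (fps_deriv F))) m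
      = (of_nat m - 1) * of_nat m * fps_nth F m"
    by (cases m; cases "m - 1") (simp_all add: algebra_simps)
  have nth_X_F1: "fps_nth (fps_X * fps_deriv F) m = of_nat m * fps_nth F m"
    by (cases m) simp_all
  show "fps_nth (fps_X * (1 - fps_X) * fps_deriv (fps_deriv F)
           + (fps_const c - fps_const (a + b + 1) * fps_X) * fps_deriv F) m
      = fps_nth (fps_const (a * b) * F) m"
    unfolding expand fps_add_nth fps_sub_nth fps_mult_left_const_nth nth_X_F2 nth_X2_F2 nth_X_F1
      fps_deriv_nth
    using rec by (simp add: algebra_simps)
qed

lemma fps_conv_radius_hyp2f1_fps:
  assumes "a \<notin> \<int>\<^sub>\<le>\<^sub>0" "b \<notin> \<int>\<^sub>\<le>\<^sub>0" "c \<notin> \<int>\<^sub>\<le>\<^sub>0"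
  shows "fps_conv_radius (hyp2f1_fps a b c) = 1"
  unfolding fps_conv_radius_def
proof (rule conv_radius_ratio_limit_nonzero)
  define h where "h = fps_nth (hyp2f1_fps a b c)"
  have nz: "a + of_nat n \<noteq> 0" "b + of_nat n \<noteq> 0" "c + of_nat n \<noteq> 0"
    "(of_nat n + 1 :: complex) \<noteq> 0" for n
    using assms by (auto dest: plus_of_nat_eq_0_imp) (metis add.commute of_nat_Suc of_nat_neq_0)
  have "(\<lambda>n. (1 + 1 / of_nat n) * (1 + c / of_nat n) / ((1 + a / of_nat n) * (1 + b / of_nat n)))
          \<longlonglongrightarrow> (1::complex)"
    by (intro tendsto_eq_intros lim_const_over_n) auto
  moreover have "\<forall>\<^sub>F n in sequentially.
      (1 + 1 / of_nat n) * (1 + c / of_nat n) / ((1 + a / of_nat n) * (1 + b / of_nat n))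
      = (of_nat n + 1) * (c + of_nat n) / ((a + of_nat n) * (b + of_nat n))"
    using eventually_gt_at_top[of 0]
  proof eventually_elim
    case (elim n)
    then have *: "1 + z / of_nat n = (z + of_nat n) / of_nat n" for z :: complex
      by (simp add: field_simps)
    show ?case
      unfolding * using elim by (simp add: add.commute[of 1])
  qed
  ultimately have "(\<lambda>n. (of_nat n + 1) * (c + of_nat n) / ((a + of_nat n) * (b + of_nat n))) \<longlonglongrightarrow> 1"
    by (rule Lim_transform_eventually)
  then have "(\<lambda>n. norm ((of_nat n + 1) * (c + of_nat n) / ((a + of_nat n) * (b + of_nat n)))) \<longlonglongrightarrow> 1"
    by (metis norm_one tendsto_norm)
  moreover have "norm (h n) / norm (h (Suc n)) =
      norm ((of_nat n + 1) * (c + of_nat n) / ((a + of_nat n) * (b + of_nat n)))" for n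
  proof -
    have "h n \<noteq> 0"
      using assms by (auto simp: h_def hyp2f1_fps_def dest: pochhammer_eq_0_imp_nonpos_Int)
    moreover have "h (Suc n) = h n * ((a + of_nat n) * (b + of_nat n)) / ((of_nat n + 1) * (c + of_nat n))"
      using nz[of n] hyp2f1_fps_nth_Suc[OF assms(3), of n a b]
      by (auto simp: h_def eq_divide_eq mult_ac)
    ultimately show ?thesis
      using nz[of n] by (simp add: norm_divide norm_mult)
  qed
  ultimately show "(\<lambda>n. norm (h n) / norm (h (Suc n))) \<longlonglongrightarrow> 1"
    by simp
qed simp_all

lemma holomorphic_on_hyp2f1:
  assumes "a \<notin> \<int>\<^sub>\<le>\<^sub>0" "b \<notin> \<int>\<^sub>\<le>\<^sub>0" "c \<notin> \<int>\<^sub>\<le>\<^sub>0"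
  shows "hyp2f1 a b c holomorphic_on ball 0 1"
proof -
  have "eval_fps (hyp2f1_fps a b c) holomorphic_on ball 0 1"
    using fps_conv_radius_hyp2f1_fps[OF assms] by (intro holomorphic_on_eval_fps) auto
  then show ?thesis
    by (simp add: hyp2f1_eq_eval_fps[abs_def])
qed

lemma eval_hyp2f1_fps_ode:
  fixes a b c w :: complex
  defines "F \<equiv> hyp2f1_fps a b c"
  assumes "c \<notin> \<int>\<^sub>\<le>\<^sub>0" and w: "norm w < fps_conv_radius F"
  shows "w * (1 - w) * eval_fps (fps_deriv (fps_deriv F)) w
           + (c - (a + b + 1) * w) * eval_fps (fps_deriv F) w = a * b * eval_fps F w"
proof -
  have rad: "norm w < fps_conv_radius (f * g)" "norm w < fps_conv_radius (f + g)"
    "norm w < fps_conv_radius (f - g)"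
    if "norm w < fps_conv_radius f" "norm w < fps_conv_radius g" for f g :: "complex fps"
    using that fps_conv_radius_mult[of f g] fps_conv_radius_add[of f g] fps_conv_radius_diff[of f g]
    by (auto simp: min_def split: if_splits)
  have rad_deriv: "norm w < fps_conv_radius (fps_deriv f)" if "norm w < fps_conv_radius f" for f :: "complex fps"
    using that fps_conv_radius_deriv[of f] by order
  have "eval_fps (fps_X * (1 - fps_X) * fps_deriv (fps_deriv F)
           + (fps_const c - fps_const (a + b + 1) * fps_X) * fps_deriv F) w = eval_fps (fps_const (a * b) * F) w"
    unfolding F_def hyp2f1_fps_ode[OF assms(2)] ..
  then show ?thesis
    by (simp add: eval_fps_mult eval_fps_add eval_fps_diff rad rad_deriv w)
qed

lemma eq_cos_if_second_order_ode:
  fixes Z Z' :: "complex \<Rightarrow> complex" and k :: complex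
  assumes "convex S" "0 \<in> S" "k \<noteq> 0" "z \<in> S"
    and Z: "\<And>z. z \<in> S \<Longrightarrow> (Z has_field_derivative Z' z) (at z within S)"
    and Z': "\<And>z. z \<in> S \<Longrightarrow> (Z' has_field_derivative - k\<^sup>2 * Z z) (at z within S)"
    and "Z 0 = 1" "Z' 0 = 0"
  shows "Z z = cos (k * z)"
proof -
  (* the coefficients of Z with respect to the solutions cos (k z) and sin (k z) *)
  define A where "A z = Z z * cos (k * z) - Z' z * sin (k * z) / k" for z
  define B where "B z = Z z * sin (k * z) + Z' z * cos (k * z) / k" for z
  have "\<exists>c. \<forall>z\<in>S. A z = c"
    unfolding A_def using \<open>k \<noteq> 0\<close>
    by (intro has_field_derivative_zero_constant[OF \<open>convex S\<close>])
       (rule derivative_eq_intros Z Z' refl | assumption | simp add: field_simps power2_eq_square)+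
  moreover have "\<exists>c. \<forall>z\<in>S. B z = c"
    unfolding B_def using \<open>k \<noteq> 0\<close>
    by (intro has_field_derivative_zero_constant[OF \<open>convex S\<close>])
       (rule derivative_eq_intros Z Z' refl | assumption | simp add: field_simps power2_eq_square)+
  ultimately obtain cA cB where "\<forall>z\<in>S. A z = cA" "\<forall>z\<in>S. B z = cB" by blast
  moreover have "A 0 = 1" "B 0 = 0" using assms by (simp_all add: A_def B_def)
  ultimately have "A z = 1" "B z = 0" using assms by auto
  then have "A z * cos (k * z) + B z * sin (k * z) = cos (k * z)" by simp
  moreover have "A z * cos (k * z) + B z * sin (k * z)
      = Z z * (cos (k * z) * cos (k * z) + sin (k * z) * sin (k * z))"
    by (simp add: A_def B_def algebra_simps del: sin_cos_squared_add3)
  ultimately show ?thesis by (simp only: sin_cos_squared_add3 mult_1_right)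
qed

lemma of_real_notin_nonpos_Ints: "x > 0 \<Longrightarrow> (of_real x :: complex) \<notin> \<int>\<^sub>\<le>\<^sub>0"
  using nonpos_Ints_nonpos by (fastforce simp: of_real_in_nonpos_Ints_iff)

lemma fps_conv_radius_hyp2f1_fps_half:
  assumes "a \<notin> \<int>"
  shows "fps_conv_radius (hyp2f1_fps a (1 - a) (1/2)) = 1"
proof -
  have "1 - a \<notin> \<int>"
    using assms Ints_diff[OF Ints_1, of "1 - a"] by auto
  then show ?thesis
    using assms of_real_notin_nonpos_Ints[of "1/2"] by (intro fps_conv_radius_hyp2f1_fps) auto
qed

lemma has_field_derivative_hyp2f1_sin_squared:
  fixes a z :: complex
  defines "F \<equiv> hyp2f1_fps a (1 - a) (1/2)"
  defines "Z \<equiv> \<lambda>z. eval_fps F (sin z ^ 2) * cos z"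
    and "Z' \<equiv> \<lambda>z. eval_fps (fps_deriv F) (sin z ^ 2) * (2 * sin z * cos z) * cos z
                  - eval_fps F (sin z ^ 2) * sin z"
  assumes "a \<notin> \<int>" "norm (sin z) < 1"
  shows "(Z has_field_derivative Z' z) (at z)"
    and "(Z' has_field_derivative - (1 - 2 * a)\<^sup>2 * Z z) (at z)"
proof -
  define w where "w = sin z ^ 2"
  have "ereal (norm w) < 1"
    using assms(5) by (simp add: w_def norm_power power_less_one_iff)
  moreover have "fps_conv_radius F = 1"
    unfolding F_def using assms(4) by (rule fps_conv_radius_hyp2f1_fps_half)
  moreover have "fps_conv_radius F \<le> fps_conv_radius (fps_deriv F)"
    "fps_conv_radius (fps_deriv F) \<le> fps_conv_radius (fps_deriv (fps_deriv F))"
    by (rule fps_conv_radius_deriv)+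
  ultimately have rad: "norm w < fps_conv_radius F" "norm w < fps_conv_radius (fps_deriv F)"
    "norm w < fps_conv_radius (fps_deriv (fps_deriv F))"
    by order+
  have d: "((\<lambda>z. eval_fps G (sin z ^ 2)) has_field_derivative
      eval_fps (fps_deriv G) (sin z ^ 2) * (2 * sin z * cos z)) (at z)"
    if "norm w < fps_conv_radius G" for G
    by (rule DERIV_chain2[where g = "\<lambda>z. sin z ^ 2",
          OF has_field_derivative_eval_fps[OF that[unfolded w_def]]])
       (auto intro!: derivative_eq_intros)
  show "(Z has_field_derivative Z' z) (at z)"
    unfolding Z_def Z'_def
    by (rule derivative_eq_intros d rad refl | simp add: algebra_simps)+
  have "(Z' has_field_derivative
      eval_fps (fps_deriv (fps_deriv F)) w * (2 * sin z * cos z) * (2 * sin z * cos z) * cos z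
      + eval_fps (fps_deriv F) w * (2 * cos z * cos z - 2 * sin z * sin z) * cos z
      - eval_fps (fps_deriv F) w * (2 * sin z * cos z) * sin z
      - (eval_fps (fps_deriv F) w * (2 * sin z * cos z) * sin z + eval_fps F w * cos z)) (at z)"
    unfolding Z'_def w_def
    by (rule derivative_eq_intros d rad refl | simp add: algebra_simps)+
  moreover have "w * (1 - w) * eval_fps (fps_deriv (fps_deriv F)) w
      + (1/2 - 2 * w) * eval_fps (fps_deriv F) w = a * (1 - a) * eval_fps F w"
    using eval_hyp2f1_fps_ode[of "1/2", OF _ rad(1)[unfolded F_def]]
      of_real_notin_nonpos_Ints[of "1/2"]
    by (simp add: F_def)
  ultimately show "(Z' has_field_derivative - (1 - 2 * a)\<^sup>2 * Z z) (at z)"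
    using sin_cos_squared_add[of z] unfolding Z_def w_def
    by (elim DERIV_cong) algebra
qed

lemma hyp2f1_sin_squared_times_cos:
  fixes a :: complex
  assumes "a \<notin> \<int>" "a \<noteq> 1/2"
  shows "\<forall>\<^sub>F z in nhds 0. hyp2f1 a (1 - a) (1/2) (sin z ^ 2) * cos z = cos ((1 - 2 * a) * z)"
proof -
  have "open {z :: complex. norm (sin z) < 1}"
    by (intro open_Collect_less continuous_intros)
  then obtain \<epsilon> where "\<epsilon> > 0" and \<epsilon>: "ball 0 \<epsilon> \<subseteq> {z :: complex. norm (sin z) < 1}"
    by (metis mem_Collect_eq norm_zero openE sin_zero zero_less_one)
  define F where "F = hyp2f1_fps a (1 - a) (1/2)"
  define Z where "Z = (\<lambda>z. eval_fps F (sin z ^ 2) * cos z)"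
  define Z' where "Z' = (\<lambda>z. eval_fps (fps_deriv F) (sin z ^ 2) * (2 * sin z * cos z) * cos z
                          - eval_fps F (sin z ^ 2) * sin z)"
  have d: "(Z has_field_derivative Z' z) (at z within S)"
    "(Z' has_field_derivative - (1 - 2 * a)\<^sup>2 * Z z) (at z within S)"
    if "norm (sin z) < 1" for z S
    using has_field_derivative_hyp2f1_sin_squared[OF assms(1) that]
    unfolding Z_def Z'_def F_def by (auto intro: has_field_derivative_at_within)
  have "Z z = cos ((1 - 2 * a) * z)" if "z \<in> ball 0 \<epsilon>" for z
  proof (rule eq_cos_if_second_order_ode[OF convex_ball _ _ that])
    fix x :: complex assume "x \<in> ball 0 \<epsilon>"
    with \<epsilon> have "norm (sin x) < 1" by auto
    then show "(Z has_field_derivative Z' x) (at x within ball 0 \<epsilon>)"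
      "(Z' has_field_derivative - (1 - 2 * a)\<^sup>2 * Z x) (at x within ball 0 \<epsilon>)"
      by (rule d)+
  qed (use \<open>\<epsilon> > 0\<close> assms(2)
        in \<open>auto simp: Z_def Z'_def F_def eval_fps_at_0 hyp2f1_fps_def field_simps\<close>)
  then show ?thesis
    unfolding hyp2f1_eq_eval_fps
    by (intro eventually_mono[OF eventually_nhds_ball[OF \<open>\<epsilon> > 0\<close>]]) (simp add: Z_def F_def)
qed

section \<open>Elliptic functions\<close>

lemma eventually_deriv_eq_at:
  fixes f g :: "complex \<Rightarrow> complex"
  assumes "\<forall>\<^sub>F w in at z. f w = g w"
  shows "\<forall>\<^sub>F w in at z. deriv f w = deriv g w"
proof -
  have "\<forall>\<^sub>F y in nhds z. \<forall>\<^sub>F w in nhds y. w \<noteq> z \<longrightarrow> f w = g w"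
    using assms by (simp add: eventually_at_filter eventually_eventually)
  then have "\<forall>\<^sub>F y in at z. \<forall>\<^sub>F w in nhds y. w \<noteq> z \<longrightarrow> f w = g w"
    by (rule filter_leD[OF at_within_le_nhds])
  moreover have "\<forall>\<^sub>F y in at z. y \<noteq> z"
    by (simp add: eventually_at_filter)
  ultimately have "\<forall>\<^sub>F y in at z. \<forall>\<^sub>F w in nhds y. f w = g w"
  proof eventually_elim
    case (elim y)
    show ?case
      using elim(1) t1_space_nhds[OF elim(2)] by eventually_elim simp
  qed
  then show ?thesis
    by eventually_elim (rule deriv_cong_ev, simp_all)
qed

lemma eventually_deriv_shift_eq:
  fixes f :: "complex \<Rightarrow> complex"
  assumes "\<forall>\<^sub>F w in at z. f (w + c) = f w"
  shows "\<forall>\<^sub>F w in at z. deriv f (w + c) = deriv f w"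
proof -
  have "deriv (\<lambda>w. f (w + c)) w = deriv f (w + c)" for w
    unfolding deriv_def by (simp add: DERIV_shift)
  then show ?thesis
    using eventually_deriv_eq_at[OF assms] by simp
qed

lemma elliptic_fun_compose_deriv:
  assumes "elliptic_fun g" and mero: "(\<lambda>w. h (g w) (deriv g w)) meromorphic_on UNIV"
  shows "elliptic_fun (\<lambda>w. h (g w) (deriv g w))"
proof -
  obtain \<omega>1 \<omega>2 where \<omega>: "\<omega>1 \<noteq> 0" "Im (\<omega>2 / \<omega>1) \<noteq> 0"
    and per: "\<And>z. \<forall>\<^sub>F w in at z. g (w + \<omega>1) = g w \<and> g (w + \<omega>2) = g w"
    using assms(1) unfolding elliptic_fun_def by blast
  have "\<forall>\<^sub>F w in at z. h (g (w + \<omega>1)) (deriv g (w + \<omega>1)) = h (g w) (deriv g w) \<and>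
      h (g (w + \<omega>2)) (deriv g (w + \<omega>2)) = h (g w) (deriv g w)" for z
  proof -
    have per1: "\<forall>\<^sub>F w in at z. g (w + \<omega>1) = g w" and per2: "\<forall>\<^sub>F w in at z. g (w + \<omega>2) = g w"
      using per[of z] by (auto elim: eventually_mono)
    from per1 per2 eventually_deriv_shift_eq[OF per1] eventually_deriv_shift_eq[OF per2]
    show ?thesis by eventually_elim simp
  qed
  with \<omega> mero show ?thesis
    unfolding elliptic_fun_def by blast
qed

lemma extends_to_elliptic_power:
  assumes "extends_to_elliptic f"
  shows "extends_to_elliptic (\<lambda>u. f u ^ n)"
proof -
  obtain g where g: "elliptic_fun g" "\<forall>\<^sub>F u in at 0. g u = f u"
    using assms unfolding extends_to_elliptic_def by blast
  have "(\<lambda>w. g w ^ n) meromorphic_on UNIV"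
    using g(1) unfolding elliptic_fun_def by (intro meromorphic_intros) simp
  then have "elliptic_fun (\<lambda>w. g w ^ n)"
    using elliptic_fun_compose_deriv[OF g(1), where h = "\<lambda>x y. x ^ n"] by simp
  moreover have "\<forall>\<^sub>F u in at 0. g u ^ n = f u ^ n"
    using g(2) by eventually_elim simp
  ultimately show ?thesis
    unfolding extends_to_elliptic_def by blast
qed

lemma periodic_of_int_multiple:
  fixes f :: "'a :: ring_1 \<Rightarrow> 'b"
  assumes "\<And>z. f (z + \<omega>) = f z"
  shows "f (z + of_int m * \<omega>) = f z"
proof -
  have nat: "f (y + of_nat n * \<omega>) = f y" for y n
  proof (induction n)
    case (Suc n)
    then show ?case
      using assms[of "y + of_nat n * \<omega>"] by (simp add: algebra_simps)
  qed simp
  show ?thesis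
  proof (cases m rule: int_cases)
    case (nonneg n)
    then show ?thesis using nat by simp
  next
    case (neg n)
    then have "z = (z + of_int m * \<omega>) + of_nat (Suc n) * \<omega>"
      by (simp add: algebra_simps del: of_nat_Suc)
    then have "f z = f ((z + of_int m * \<omega>) + of_nat (Suc n) * \<omega>)"
      by (rule arg_cong)
    also have "\<dots> = f (z + of_int m * \<omega>)"
      by (rule nat)
    finally show ?thesis ..
  qed
qed

lemma complex_lattice_coordinates:
  fixes \<omega>1 \<omega>2 z :: complex
  assumes "\<omega>1 \<noteq> 0" "Im (\<omega>2 / \<omega>1) \<noteq> 0"
  obtains p q :: real where "z = of_real p * \<omega>1 + of_real q * \<omega>2"
proof
  define \<tau> where "\<tau> = \<omega>2 / \<omega>1"
  define q where "q = Im (z / \<omega>1) / Im \<tau>"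
  define p where "p = Re (z / \<omega>1) - q * Re \<tau>"
  have "z / \<omega>1 = of_real p + of_real q * \<tau>"
    using assms(2) by (intro complex_eqI) (simp_all add: p_def q_def flip: \<tau>_def)
  then have "z = of_real p * \<omega>1 + of_real q * (\<tau> * \<omega>1)"
    using assms(1) by (simp add: field_simps)
  moreover have "\<tau> * \<omega>1 = \<omega>2"
    using assms(1) by (simp add: \<tau>_def)
  ultimately show "z = of_real p * \<omega>1 + of_real q * \<omega>2"
    by simp
qed

lemma entire_doubly_periodic_imp_constant:
  fixes f :: "complex \<Rightarrow> complex"
  assumes hol: "f holomorphic_on UNIV"
    and \<omega>: "\<omega>1 \<noteq> 0" "Im (\<omega>2 / \<omega>1) \<noteq> 0"
    and per: "\<And>z. f (z + \<omega>1) = f z" "\<And>z. f (z + \<omega>2) = f z"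
  shows "f constant_on UNIV"
proof (rule Liouville_theorem[OF hol])
  define P where "P = (\<lambda>(p, q). of_real p * \<omega>1 + of_real q * \<omega>2) ` ({0..1::real} \<times> {0..1::real})"
  have "compact P"
    unfolding P_def case_prod_unfold
    by (intro compact_continuous_image continuous_intros compact_Times compact_Icc)
  then have "bounded (f ` P)"
    using holomorphic_on_imp_continuous_on[OF hol]
    by (intro compact_imp_bounded compact_continuous_image) (auto elim: continuous_on_subset)
  moreover have "range f \<subseteq> f ` P"
  proof safe
    fix z
    obtain p q :: real where z: "z = of_real p * \<omega>1 + of_real q * \<omega>2"
      using complex_lattice_coordinates[OF \<omega>] by blast
    define z0 where "z0 = of_real (frac p) * \<omega>1 + of_real (frac q) * \<omega>2"
    have "z0 \<in> P"
      unfolding P_def z0_def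
      by (rule image_eqI[of _ _ "(frac p, frac q)"]) (auto simp: less_imp_le[OF frac_lt_1])
    have "z = (z0 + of_int \<lfloor>p\<rfloor> * \<omega>1) + of_int \<lfloor>q\<rfloor> * \<omega>2"
      unfolding z z0_def frac_def by (simp add: algebra_simps)
    then have "f z = f z0"
      using periodic_of_int_multiple[of f, OF per(1)] periodic_of_int_multiple[of f, OF per(2)] by simp
    with \<open>z0 \<in> P\<close> show "f z \<in> f ` P" by blast
  qed
  ultimately show "bounded (range f)"
    using bounded_subset by blast
qed

lemma elliptic_fun_without_poles_imp_constant:
  assumes "elliptic_fun f" and no_pole: "\<And>z. \<not> is_pole f z"
  obtains c where "\<And>z. \<forall>\<^sub>F w in at z. f w = c"
proof -
  obtain \<omega>1 \<omega>2 where \<omega>: "\<omega>1 \<noteq> 0" "Im (\<omega>2 / \<omega>1) \<noteq> 0"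
    and per: "\<And>z. \<forall>\<^sub>F w in at z. f (w + \<omega>1) = f w \<and> f (w + \<omega>2) = f w"
    and mero: "f meromorphic_on UNIV"
    using assms(1) unfolding elliptic_fun_def by blast
  define R where "R = remove_sings f"
  have iso: "isolated_singularity_at f z" for z
    using meromorphic_on_isolated_singularity[OF meromorphic_on_subset[OF mero]] by simp
  have lim: "f \<midarrow>z\<rightarrow> R z" for z
  proof -
    have "not_essential f z"
      using meromorphic_on_not_essential[OF meromorphic_on_subset[OF mero]] by simp
    then obtain c where "f \<midarrow>z\<rightarrow> c"
      using no_pole by (auto simp: not_essential_def)
    then show ?thesis
      unfolding R_def by (simp add: remove_sings_eqI)
  qed
  have "R analytic_on {z}" for z
    unfolding R_def using remove_sings_analytic_at[OF iso lim] .
  then have "R analytic_on UNIV"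
    using analytic_on_analytic_at by blast
  then have hol: "R holomorphic_on UNIV"
    by (rule analytic_imp_holomorphic)
  have R_periodic: "R (z + \<omega>) = R z" if "\<forall>\<^sub>F w in at z. f (w + \<omega>) = f w" for z \<omega>
  proof -
    have "(\<lambda>w. f (w + \<omega>)) \<midarrow>z\<rightarrow> R (z + \<omega>)"
      using LIM_offset[OF lim[of "z + \<omega>"], of \<omega>] by simp
    then have "f \<midarrow>z\<rightarrow> R (z + \<omega>)"
      using that by (rule Lim_transform_eventually)
    then show ?thesis
      unfolding R_def by (rule remove_sings_eqI[symmetric])
  qed
  have "R constant_on UNIV"
  proof (rule entire_doubly_periodic_imp_constant[OF hol \<omega>])
    show "R (z + \<omega>1) = R z" "R (z + \<omega>2) = R z" for z
      using per[of z] by (auto intro!: R_periodic elim: eventually_mono)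
  qed
  then obtain c where c: "\<And>w. R w = c"
    by (auto simp: constant_on_def)
  show ?thesis
  proof (rule that)
    fix z
    show "\<forall>\<^sub>F w in at z. f w = c"
      using eventually_remove_sings_eq_at[OF iso[of z]] by eventually_elim (use c in \<open>simp add: R_def\<close>)
  qed
qed

lemma elliptic_fun_has_zero:
  assumes "elliptic_fun f" and nonconst: "\<not> (\<exists>c. \<forall>\<^sub>F w in at z0. f w = c)"
  shows "\<exists>u. f \<midarrow>u\<rightarrow> 0"
proof (rule ccontr)
  assume no_zero: "\<nexists>u. f \<midarrow>u\<rightarrow> 0"
  have "(\<lambda>w. inverse (f w)) meromorphic_on UNIV"
    using assms(1) unfolding elliptic_fun_def by (intro meromorphic_intros) simp
  then have "elliptic_fun (\<lambda>w. inverse (f w))"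
    using elliptic_fun_compose_deriv[OF assms(1), where h = "\<lambda>x y. inverse x"] by simp
  moreover have "\<not> is_pole (\<lambda>w. inverse (f w)) u" for u
  proof
    assume "is_pole (\<lambda>w. inverse (f w)) u"
    then have "((\<lambda>w. inverse (inverse (f w))) \<longlongrightarrow> 0) (at u)"
      unfolding is_pole_def by (rule filterlim_compose[OF tendsto_inverse_0])
    with no_zero show False by simp
  qed
  ultimately obtain c where "\<forall>\<^sub>F w in at z0. inverse (f w) = c"
    by (rule elliptic_fun_without_poles_imp_constant) blast
  then have "\<forall>\<^sub>F w in at z0. f w = inverse c"
    by eventually_elim (metis inverse_inverse_eq)
  with nonconst show False by blast
qed

lemma meromorphic_on_poly [meromorphic_intros]:
  assumes "f meromorphic_on A"
  shows "(\<lambda>w. poly p (f w)) meromorphic_on A"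
  by (induction p) (simp_all add: meromorphic_on_add meromorphic_on_mult meromorphic_on_const assms)

lemma meromorphic_eventually_zero_spreads:
  assumes "E meromorphic_on UNIV" "\<forall>\<^sub>F w in at z0. E w = 0"
  shows "\<forall>\<^sub>F w in at z. E w = 0"
  using meromorphic_imp_constant_or_avoid[OF assms(1) open_UNIV connected_UNIV, of 0]
proof
  assume "\<forall>\<^sub>F w in cosparse UNIV. E w \<noteq> 0"
  then have "\<forall>\<^sub>F w in at z0. E w \<noteq> 0"
    by (simp add: eventually_cosparse_open_eq)
  with assms(2) have "\<forall>\<^sub>F w in at z0. False"
    by eventually_elim simp
  then show ?thesis by simp
qed (simp add: eventually_cosparse_open_eq)

lemma deriv_tendsto_at_removable_sing:
  assumes "isolated_singularity_at f u" "f \<midarrow>u\<rightarrow> c"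
  obtains L where "deriv f \<midarrow>u\<rightarrow> L"
proof
  define R where "R = remove_sings f"
  have "R analytic_on {u}"
    unfolding R_def using remove_sings_analytic_at[OF assms] .
  then have "deriv R \<midarrow>u\<rightarrow> deriv R u"
    using analytic_at_imp_isCont[OF analytic_deriv] by (simp add: isCont_def)
  moreover have "\<forall>\<^sub>F w in at u. deriv R w = deriv f w"
    unfolding R_def by (intro eventually_deriv_eq_at eventually_remove_sings_eq_at[OF assms(1)])
  ultimately show "deriv f \<midarrow>u\<rightarrow> deriv R u"
    by (rule Lim_transform_eventually)
qed

lemma elliptic_fun_poly_ode_zero:
  fixes A B :: "complex poly"
  assumes ell: "elliptic_fun f" and nonconst: "\<not> (\<exists>c. \<forall>\<^sub>F w in at z0. f w = c)"
    and ode: "\<forall>\<^sub>F w in at z0. poly A (f w) * (deriv f w)\<^sup>2 = poly B (f w)"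
    and "poly A 0 = 0"
  shows "poly B 0 = 0"
proof -
  define E where "E w = poly A (f w) * (deriv f w)\<^sup>2 - poly B (f w)" for w
  have mero: "f meromorphic_on UNIV"
    using ell unfolding elliptic_fun_def by blast
  then have "E meromorphic_on UNIV"
    unfolding E_def[abs_def] by (intro meromorphic_intros)
  moreover have "\<forall>\<^sub>F w in at z0. E w = 0"
    using ode by eventually_elim (simp add: E_def)
  ultimately have E_zero: "\<forall>\<^sub>F w in at z. E w = 0" for z
    by (rule meromorphic_eventually_zero_spreads)
  obtain u where u: "f \<midarrow>u\<rightarrow> 0"
    using elliptic_fun_has_zero[OF ell nonconst] by blast
  have "isolated_singularity_at f u"
    using meromorphic_on_isolated_singularity[OF meromorphic_on_subset[OF mero]] by simp
  then obtain L where "deriv f \<midarrow>u\<rightarrow> L"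
    using u by (rule deriv_tendsto_at_removable_sing)
  then have "E \<midarrow>u\<rightarrow> poly A 0 * L\<^sup>2 - poly B 0"
    unfolding E_def[abs_def]
    by (intro tendsto_intros u isCont_tendsto_compose[OF poly_isCont] isCont_tendsto_compose[OF poly_isCont])
  moreover have "E \<midarrow>u\<rightarrow> 0"
    using E_zero[of u] by (rule tendsto_eventually)
  ultimately show ?thesis
    using \<open>poly A 0 = 0\<close> tendsto_unique[OF at_neq_bot] by fastforce
qed

section \<open>Inverting the hypergeometric integral\<close>

lemma contour_integral_linepath_has_field_derivative:
  fixes f :: "complex \<Rightarrow> complex"
  assumes "f holomorphic_on S" "convex S" "open S" "a \<in> S" "w \<in> S"
  shows "((\<lambda>w. contour_integral (linepath a w) f) has_field_derivative f w) (at w)"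
proof -
  obtain g where g: "\<And>x. x \<in> S \<Longrightarrow> (g has_field_derivative f x) (at x within S)"
    using holomorphic_convex_primitive'[OF assms(2,3,1)] by blast
  have "(g has_field_derivative f w) (at w)"
    using g[OF assms(5)] at_within_open[OF assms(5,3)] by simp
  then have "((\<lambda>x. g x - g a) has_field_derivative f w) (at w)"
    by (auto intro!: derivative_eq_intros)
  then show ?thesis
  proof (rule has_field_derivative_transform_within_open[OF _ assms(3,5)])
    fix x assume "x \<in> S"
    then have "closed_segment a x \<subseteq> S"
      using assms(2,4) by (rule closed_segment_subset[rotated])
    then have "(f has_contour_integral g x - g a) (linepath a x)"
      using contour_integral_primitive[OF g, of "linepath a x"] by simp
    then show "g x - g a = contour_integral (linepath a x) f"
      by (rule contour_integral_unique[symmetric])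
  qed
qed

lemma has_field_derivative_tan_squared:
  fixes f :: "complex \<Rightarrow> complex"
  assumes "(f has_field_derivative f') (at u)" "cos (f u) \<noteq> 0"
  shows "((\<lambda>u. sin (f u)^2 / cos (f u)^2) has_field_derivative 2 * sin (f u) * f' / cos (f u)^3) (at u)"
proof -
  have "((\<lambda>u. sin (f u)^2 / cos (f u)^2) has_field_derivative
      (2 * sin (f u) * (cos (f u) * f') * cos (f u)^2 - sin (f u)^2 * (2 * cos (f u) * (- sin (f u) * f')))
        / (cos (f u)^2 * cos (f u)^2)) (at u)"
    using assms by (auto intro!: derivative_eq_intros)
  moreover have "(2 * sin (f u) * (cos (f u) * f') * cos (f u)^2 - sin (f u)^2 * (2 * cos (f u) * (- sin (f u) * f')))
        / (cos (f u)^2 * cos (f u)^2) = 2 * sin (f u) * f' / cos (f u)^3"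
    using assms(2) by (simp add: field_simps power2_eq_square power3_eq_cube)
                      (use sin_cos_squared_add[of "f u"] in algebra)
  ultimately show ?thesis
    by simp
qed

locale hyp2f1_integral_inverse =
  fixes \<kappa> r :: real and \<phi> \<psi> :: "complex \<Rightarrow> complex"
  assumes \<kappa>: "0 < \<kappa>" "\<kappa> < 1"
    and r: "r > 0"
    and \<phi>_hol: "\<phi> holomorphic_on ball 0 r" and \<phi>0: "\<phi> 0 = 0"
    and \<phi>_inv: "\<And>u. u \<in> ball 0 r \<Longrightarrow>
       contour_integral (linepath 0 (sin (\<phi> u)))
         (\<lambda>t. hyp2f1 (1/6) (5/6) (1/2) (complex_of_real (\<kappa>^2) * t^2) / csqrt (1 - t^2)) = u"
    and \<psi>_hol: "\<psi> holomorphic_on ball 0 r" and \<psi>0: "\<psi> 0 = 0"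
    and \<psi>_sin: "\<And>u. u \<in> ball 0 r \<Longrightarrow> sin (\<psi> u) = complex_of_real \<kappa> * sin (\<phi> u)"
begin

definition integrand :: "complex \<Rightarrow> complex" where
  "integrand t = hyp2f1 (1/6) (5/6) (1/2) (complex_of_real (\<kappa>^2) * t^2) / csqrt (1 - t^2)"

definition T :: "complex \<Rightarrow> complex" where
  "T u = sin (\<phi> u)^2 / cos (\<phi> u)^2"

definition \<delta> :: "complex \<Rightarrow> complex" where
  "\<delta> u = cos (2/3 * \<psi> u)"

(* Solves \<delta>\<^sup>2 T'\<^sup>2 = 4 T (1 + T) (1 + \<lambda>\<^sup>2 T) and 1 + (2\<lambda>\<^sup>2 - 1) T = (4\<delta>\<^sup>3 - 3\<delta>) (1 + T) for \<delta>. *)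
definition \<delta>_of_T :: "complex \<Rightarrow> complex \<Rightarrow> complex" where
  "\<delta>_of_T y y' = (1 + (1 - 2 * complex_of_real \<kappa>^2) * y) * y'^2 /
     ((1 + y) * (16 * y * (1 + y) * (1 + (1 - complex_of_real \<kappa>^2) * y) - 3 * y'^2))"

lemma holomorphic_on_integrand: "integrand holomorphic_on ball 0 1"
proof -
  have "\<kappa>^2 < 1"
    using \<kappa> by (simp add: power_less_one_iff abs_less_iff)
  have hol: "hyp2f1 (1/6) (5/6) (1/2) holomorphic_on ball 0 1"
    using of_real_notin_nonpos_Ints[of "1/6"] of_real_notin_nonpos_Ints[of "5/6"]
      of_real_notin_nonpos_Ints[of "1/2"]
    by (intro holomorphic_on_hyp2f1) simp_all
  have small: "norm ((complex_of_real \<kappa>)^2 * t^2) < 1" "1 - t^2 \<notin> \<real>\<^sub>\<le>\<^sub>0" "t^2 \<noteq> 1"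
    if "norm t < 1" for t :: complex
  proof -
    have t: "norm (t^2) < 1"
      using that by (simp add: norm_power power_less_one_iff)
    have "\<kappa>^2 * norm (t^2) < 1 * 1"
      using t \<open>\<kappa>^2 < 1\<close> by (intro mult_strict_mono) auto
    then show "norm ((complex_of_real \<kappa>)^2 * t^2) < 1"
      by (simp add: norm_mult norm_power)
    have "Re (t^2) < 1"
      using t complex_Re_le_cmod[of "t^2"] by linarith
    then show "1 - t^2 \<notin> \<real>\<^sub>\<le>\<^sub>0" "t^2 \<noteq> 1"
      by (auto simp: complex_nonpos_Reals_iff)
  qed
  have "(\<lambda>t. hyp2f1 (1/6) (5/6) (1/2) (complex_of_real (\<kappa>^2) * t^2) / csqrt (1 - t^2))
      holomorphic_on ball 0 1"
    by (intro holomorphic_intros holomorphic_on_compose_gen[OF _ hol, unfolded o_def])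
       (auto dest: small)
  then show ?thesis
    unfolding integrand_def[abs_def] .
qed

lemma tendsto_\<phi>: "(\<phi> \<longlongrightarrow> 0) (nhds 0)" and tendsto_\<psi>: "(\<psi> \<longlongrightarrow> 0) (nhds 0)"
proof -
  have "isCont \<phi> 0" "isCont \<psi> 0"
    using \<phi>_hol \<psi>_hol r
    by (meson centre_in_ball continuous_on_eq_continuous_at holomorphic_on_imp_continuous_on open_ball)+
  then show "(\<phi> \<longlongrightarrow> 0) (nhds 0)" "(\<psi> \<longlongrightarrow> 0) (nhds 0)"
    using tendsto_at_iff_tendsto_nhds[of \<phi> 0] tendsto_at_iff_tendsto_nhds[of \<psi> 0] \<phi>0 \<psi>0
    by (simp_all add: isCont_def)
qed

lemma sin_\<phi>_eq_0_iff: "u \<in> ball 0 r \<Longrightarrow> sin (\<phi> u) = 0 \<longleftrightarrow> u = 0"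
  using \<phi>_inv[of u] \<phi>0 by auto

lemma cos_\<psi>_squared: "u \<in> ball 0 r \<Longrightarrow> cos (\<psi> u)^2 = 1 - complex_of_real \<kappa>^2 * sin (\<phi> u)^2"
  using \<psi>_sin[of u] by (simp add: cos_squared_eq power_mult_distrib)

lemma \<delta>_cubic: "u \<in> ball 0 r \<Longrightarrow> 4 * \<delta> u^3 - 3 * \<delta> u = 1 - 2 * complex_of_real \<kappa>^2 * sin (\<phi> u)^2"
  using cos_treble_cos[of "2/3 * \<psi> u"] cos_double_sin[of "\<psi> u"] \<psi>_sin[of u]
  by (auto simp: \<delta>_def power_mult_distrib mult.assoc)

lemma eventually_nonzero:
  "\<forall>\<^sub>F u in nhds 0. Re (cos (\<phi> u)) > 0 \<and> cos (\<psi> u) \<noteq> 0 \<and> \<delta> u \<noteq> 0 \<and> 4 * \<delta> u^2 - 3 \<noteq> 0"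
proof -
  have "((\<lambda>u. Re (cos (\<phi> u))) \<longlongrightarrow> 1) (nhds 0)" "((\<lambda>u. cos (\<psi> u)) \<longlongrightarrow> 1) (nhds 0)"
    "(\<delta> \<longlongrightarrow> 1) (nhds 0)" "((\<lambda>u. 4 * \<delta> u^2 - 3) \<longlongrightarrow> 1) (nhds 0)"
    unfolding \<delta>_def by (auto intro!: tendsto_eq_intros tendsto_\<phi> tendsto_\<psi>)
  then show ?thesis
    by (intro eventually_conj order_tendstoD(1) tendsto_imp_eventually_ne) auto
qed

lemma integrand_at_sin_\<phi>:
  "\<forall>\<^sub>F u in nhds 0. integrand (sin (\<phi> u)) = \<delta> u / (cos (\<psi> u) * cos (\<phi> u))"
proof -
  have "(1/6 :: complex) \<notin> \<int>"
    using Ints_nonzero_abs_ge1[of "1/6 :: real"] of_real_in_Ints_iff[of "1/6 :: real"] by auto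
  then have "\<forall>\<^sub>F z in nhds 0. hyp2f1 (1/6) (5/6) (1/2) (sin z ^ 2) * cos z = cos (2/3 * z)"
    using hyp2f1_sin_squared_times_cos[of "1/6"] by simp
  then have "\<forall>\<^sub>F u in nhds 0. hyp2f1 (1/6) (5/6) (1/2) (sin (\<psi> u) ^ 2) * cos (\<psi> u) = \<delta> u"
    using tendsto_\<psi> unfolding \<delta>_def filterlim_iff by blast
  with eventually_nhds_ball[OF r] eventually_nonzero show ?thesis
  proof eventually_elim
    case (elim u)
    then have "hyp2f1 (1/6) (5/6) (1/2) (sin (\<psi> u) ^ 2) = \<delta> u / cos (\<psi> u)"
      by (auto simp: eq_divide_eq)
    moreover have "complex_of_real (\<kappa>^2) * sin (\<phi> u)^2 = sin (\<psi> u)^2"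
      using \<psi>_sin[of u] elim by (simp add: power_mult_distrib)
    moreover have "csqrt (1 - sin (\<phi> u)^2) = cos (\<phi> u)"
      using elim by (intro csqrt_unique) (auto simp: cos_squared_eq)
    ultimately show ?case
      by (simp add: integrand_def mult.commute)
  qed
qed

lemma integrand_sin_\<phi>_times_deriv:
  "\<forall>\<^sub>F u in nhds 0. integrand (sin (\<phi> u)) * (cos (\<phi> u) * deriv \<phi> u) = 1"
proof -
  have "\<forall>\<^sub>F u in nhds 0. norm (sin (\<phi> u)) < 1"
    by (intro order_tendstoD(2)[of _ 0]) (auto intro!: tendsto_eq_intros tendsto_\<phi>)
  with eventually_nhds_ball[OF r] show ?thesis
  proof eventually_elim
    case (elim u)
    define G where "G w = contour_integral (linepath 0 w) integrand" for w
    have "(G has_field_derivative integrand (sin (\<phi> u))) (at (sin (\<phi> u)))"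
      unfolding G_def[abs_def] using elim
      by (intro contour_integral_linepath_has_field_derivative[OF holomorphic_on_integrand convex_ball open_ball])
         auto
    moreover have "((\<lambda>x. sin (\<phi> x)) has_field_derivative cos (\<phi> u) * deriv \<phi> u) (at u)"
      using \<phi>_hol elim by (auto intro!: derivative_eq_intros holomorphic_derivI)
    ultimately have "((\<lambda>x. G (sin (\<phi> x))) has_field_derivative
        integrand (sin (\<phi> u)) * (cos (\<phi> u) * deriv \<phi> u)) (at u)"
      by (rule DERIV_chain2)
    moreover have "((\<lambda>x. G (sin (\<phi> x))) has_field_derivative 1) (at u)"
    proof (rule has_field_derivative_transform_within_open[OF DERIV_ident open_ball])
      show "x = G (sin (\<phi> x))" if "x \<in> ball 0 r" for x
        using \<phi>_inv[OF that] by (simp add: G_def integrand_def[abs_def])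
    qed (use elim in auto)
    ultimately show ?case
      by (rule DERIV_unique)
  qed
qed

lemma has_field_derivative_\<phi>:
  "\<forall>\<^sub>F u in nhds 0. (\<phi> has_field_derivative cos (\<psi> u) / \<delta> u) (at u)"
  using integrand_sin_\<phi>_times_deriv integrand_at_sin_\<phi> eventually_nonzero eventually_nhds_ball[OF r]
proof eventually_elim
  case (elim u)
  then have "cos (\<phi> u) \<noteq> 0"
    by auto
  with elim have "deriv \<phi> u = cos (\<psi> u) / \<delta> u"
    by (auto simp: field_simps)
  moreover have "(\<phi> has_field_derivative deriv \<phi> u) (at u)"
    using \<phi>_hol elim by (intro holomorphic_derivI) auto
  ultimately show ?case by simp
qed

lemma has_field_derivative_\<psi>:
  "\<forall>\<^sub>F u in nhds 0. (\<psi> has_field_derivative complex_of_real \<kappa> * cos (\<phi> u) / \<delta> u) (at u)"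
  using eventually_nhds_ball[OF r] eventually_nonzero has_field_derivative_\<phi>
proof eventually_elim
  case (elim u)
  have d\<psi>: "(\<psi> has_field_derivative deriv \<psi> u) (at u)"
    using \<psi>_hol elim by (intro holomorphic_derivI) auto
  then have "((\<lambda>x. sin (\<psi> x)) has_field_derivative cos (\<psi> u) * deriv \<psi> u) (at u)"
    by (auto intro!: derivative_eq_intros)
  moreover have "((\<lambda>x. sin (\<psi> x)) has_field_derivative
      complex_of_real \<kappa> * (cos (\<phi> u) * (cos (\<psi> u) / \<delta> u))) (at u)"
  proof (rule has_field_derivative_transform_within_open[OF _ open_ball[of 0 r]])
    show "((\<lambda>x. complex_of_real \<kappa> * sin (\<phi> x)) has_field_derivative
        complex_of_real \<kappa> * (cos (\<phi> u) * (cos (\<psi> u) / \<delta> u))) (at u)"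
      using elim by (auto intro!: derivative_eq_intros)
  qed (use elim \<psi>_sin in auto)
  ultimately have "cos (\<psi> u) * deriv \<psi> u = complex_of_real \<kappa> * (cos (\<phi> u) * (cos (\<psi> u) / \<delta> u))"
    by (rule DERIV_unique)
  then have "deriv \<psi> u = complex_of_real \<kappa> * cos (\<phi> u) / \<delta> u"
    using elim by (auto simp: field_simps)
  with d\<psi> show ?case by simp
qed

lemma has_field_derivative_T:
  "\<forall>\<^sub>F u in nhds 0. (T has_field_derivative 2 * sin (\<phi> u) * cos (\<psi> u) / (\<delta> u * cos (\<phi> u)^3)) (at u)"
  using has_field_derivative_\<phi> eventually_nonzero
proof eventually_elim
  case (elim u)
  then have "cos (\<phi> u) \<noteq> 0" by auto
  with elim show ?case
    using has_field_derivative_tan_squared[of \<phi> "cos (\<psi> u) / \<delta> u" u]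
    by (simp add: T_def[abs_def] field_simps)
qed

lemma T_ode:
  "\<forall>\<^sub>F u in nhds 0. \<delta> u^2 * (deriv T u)^2 = 4 * T u * (1 + T u) * (1 + (1 - complex_of_real \<kappa>^2) * T u)"
  using has_field_derivative_T eventually_nonzero eventually_nhds_ball[OF r]
proof eventually_elim
  case (elim u)
  define s c where "s = sin (\<phi> u)" and "c = cos (\<phi> u)"
  have "c \<noteq> 0" "\<delta> u \<noteq> 0" "s^2 + c^2 = 1"
    using elim by (auto simp: s_def c_def)
  have "\<delta> u^2 * (deriv T u)^2 = 4 * s^2 * cos (\<psi> u)^2 / c^6"
    using elim(1) \<open>\<delta> u \<noteq> 0\<close> by (simp add: DERIV_imp_deriv s_def c_def field_simps)
  also have "\<dots> = 4 * s^2 * (1 - complex_of_real \<kappa>^2 * s^2) / c^6"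
    using cos_\<psi>_squared elim(3) by (simp add: s_def)
  also have "\<dots> = 4 * (s^2 / c^2) * (1 / c^2) * ((1 - complex_of_real \<kappa>^2 * s^2) / c^2)"
    using \<open>c \<noteq> 0\<close> by (simp add: field_simps)
  also have "1 / c^2 = 1 + T u"
    using \<open>c \<noteq> 0\<close> \<open>s^2 + c^2 = 1\<close> by (simp add: T_def s_def c_def field_simps)
  also have "(1 - complex_of_real \<kappa>^2 * s^2) / c^2 = 1 + (1 - complex_of_real \<kappa>^2) * T u"
    using \<open>c \<noteq> 0\<close> \<open>s^2 + c^2 = 1\<close> by (simp add: T_def s_def c_def field_simps)
  also have "s^2 / c^2 = T u"
    by (simp add: T_def s_def c_def)
  finally show ?case .
qed

lemma \<delta>_ode:
  "\<forall>\<^sub>F u in nhds 0. 9 * \<delta> u^2 * (deriv \<delta> u)^2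
     = 2 * (1 - \<delta> u^2) * (4 * \<delta> u^3 - 3 * \<delta> u + 1 - 2 * (1 - complex_of_real \<kappa>^2))"
  using has_field_derivative_\<psi> eventually_nonzero eventually_nhds_ball[OF r]
proof eventually_elim
  case (elim u)
  have "((\<lambda>x. cos (2/3 * \<psi> x)) has_field_derivative
      - sin (2/3 * \<psi> u) * (2/3 * (complex_of_real \<kappa> * cos (\<phi> u) / \<delta> u))) (at u)"
    using elim(1) by (auto intro!: derivative_eq_intros)
  moreover have "(\<lambda>x. cos (2/3 * \<psi> x)) = \<delta>"
    by (simp add: fun_eq_iff \<delta>_def)
  ultimately have "deriv \<delta> u = - sin (2/3 * \<psi> u) * (2/3 * (complex_of_real \<kappa> * cos (\<phi> u) / \<delta> u))"
    by (simp add: DERIV_imp_deriv)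
  then have "3 * \<delta> u * deriv \<delta> u = - (2 * complex_of_real \<kappa> * cos (\<phi> u) * sin (2/3 * \<psi> u))"
    using elim(2) by (simp add: field_simps)
  then have "(3 * \<delta> u * deriv \<delta> u)^2 = (2 * complex_of_real \<kappa> * cos (\<phi> u) * sin (2/3 * \<psi> u))^2"
    by simp
  then have "9 * \<delta> u^2 * (deriv \<delta> u)^2 = 4 * sin (2/3 * \<psi> u)^2 * complex_of_real \<kappa>^2 * cos (\<phi> u)^2"
    by (simp add: algebra_simps)
  also have "\<dots> = 2 * (1 - \<delta> u^2) * (2 * complex_of_real \<kappa>^2 * (1 - sin (\<phi> u)^2))"
    unfolding sin_squared_eq[of "2/3 * \<psi> u"] cos_squared_eq[of "\<phi> u"] \<delta>_def
    by (simp add: algebra_simps)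
  also have "2 * complex_of_real \<kappa>^2 * (1 - sin (\<phi> u)^2)
      = 4 * \<delta> u^3 - 3 * \<delta> u + 1 - 2 * (1 - complex_of_real \<kappa>^2)"
    unfolding \<delta>_cubic[OF elim(3)] by (simp add: algebra_simps)
  finally show ?case .
qed

lemma \<delta>_eq_\<delta>_of_T: "\<forall>\<^sub>F u in at 0. \<delta> u = \<delta>_of_T (T u) (deriv T u)"
proof -
  have "\<forall>\<^sub>F u in at 0. u \<noteq> 0"
    by (simp add: eventually_at_filter)
  with filter_leD[OF at_within_le_nhds has_field_derivative_T] filter_leD[OF at_within_le_nhds T_ode]
    filter_leD[OF at_within_le_nhds eventually_nonzero]
    filter_leD[OF at_within_le_nhds eventually_nhds_ball[OF r]]
  show ?thesis
  proof eventually_elim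
    case (elim u)
    define s c where "s = sin (\<phi> u)" and "c = cos (\<phi> u)"
    define D where "D = deriv T u"
    have "c \<noteq> 0" "s \<noteq> 0" "s^2 + c^2 = 1"
      using elim sin_\<phi>_eq_0_iff[of u] by (auto simp: s_def c_def)
    have "D \<noteq> 0"
      using elim \<open>c \<noteq> 0\<close> \<open>s \<noteq> 0\<close> by (auto simp: D_def DERIV_imp_deriv s_def c_def)
    have one_plus_T: "1 + T u = 1 / c^2"
      using \<open>c \<noteq> 0\<close> \<open>s^2 + c^2 = 1\<close> by (simp add: T_def s_def c_def field_simps)
    have num: "1 + (1 - 2 * complex_of_real \<kappa>^2) * T u = (4 * \<delta> u^3 - 3 * \<delta> u) * (1 + T u)"
      using \<delta>_cubic[of u] elim \<open>c \<noteq> 0\<close> \<open>s^2 + c^2 = 1\<close>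
      by (simp add: one_plus_T T_def s_def c_def field_simps)
    have "16 * T u * (1 + T u) * (1 + (1 - complex_of_real \<kappa>^2) * T u)
        = 4 * (4 * T u * (1 + T u) * (1 + (1 - complex_of_real \<kappa>^2) * T u))"
      by simp
    then have den: "16 * T u * (1 + T u) * (1 + (1 - complex_of_real \<kappa>^2) * T u) - 3 * D^2
        = D^2 * (4 * \<delta> u^2 - 3)"
      unfolding elim(2)[folded D_def, symmetric] by (simp add: algebra_simps)
    have "1 + T u \<noteq> 0" "4 * \<delta> u^2 - 3 \<noteq> 0" "\<delta> u \<noteq> 0"
      using elim \<open>c \<noteq> 0\<close> by (auto simp: one_plus_T)
    have "\<delta>_of_T (T u) D
        = (4 * \<delta> u^3 - 3 * \<delta> u) * (1 + T u) * D^2 / ((1 + T u) * (D^2 * (4 * \<delta> u^2 - 3)))"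
      unfolding \<delta>_of_T_def num den ..
    also have "\<dots> = \<delta> u * ((4 * \<delta> u^2 - 3) * (1 + T u) * D^2) / ((4 * \<delta> u^2 - 3) * (1 + T u) * D^2)"
      by (simp add: algebra_simps power2_eq_square power3_eq_cube)
    also have "\<dots> = \<delta> u"
      using \<open>1 + T u \<noteq> 0\<close> \<open>4 * \<delta> u^2 - 3 \<noteq> 0\<close> \<open>D \<noteq> 0\<close> by simp
    finally show ?case
      by (simp add: D_def)
  qed
qed

lemma \<delta>_not_eventually_constant: "\<not> (\<exists>c. \<forall>\<^sub>F u in at 0. \<delta> u = c)"
proof
  assume "\<exists>c. \<forall>\<^sub>F u in at 0. \<delta> u = c"
  then obtain c where c: "\<forall>\<^sub>F u in at 0. \<delta> u = c" by blast
  have "(\<delta> \<longlongrightarrow> 1) (at 0)"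
    unfolding \<delta>_def by (auto intro!: tendsto_eq_intros tendsto_\<psi>[THEN filterlim_mono] at_within_le_nhds)
  moreover have "(\<delta> \<longlongrightarrow> c) (at 0)"
    using c by (rule tendsto_eventually)
  ultimately have "c = 1"
    using tendsto_unique[OF at_neq_bot] by blast
  have "\<forall>\<^sub>F u in at 0. u \<noteq> 0 \<and> u \<in> ball 0 r"
    using eventually_at_ball[OF r, of 0 UNIV] by (simp add: eventually_at_filter)
  with c have "\<forall>\<^sub>F u in at 0. sin (\<phi> u) = 0 \<and> u \<noteq> 0 \<and> u \<in> ball 0 r"
  proof eventually_elim
    case (elim u)
    then have "1 - 2 * complex_of_real \<kappa>^2 * sin (\<phi> u)^2 = 1"
      using \<delta>_cubic[of u] \<open>c = 1\<close> by simp
    with elim \<kappa> show ?case by simp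
  qed
  then have "\<forall>\<^sub>F u in at (0::complex). False"
    by (rule eventually_mono) (use sin_\<phi>_eq_0_iff in blast)
  then show False by simp
qed

lemma not_extends_to_elliptic_T: "\<not> extends_to_elliptic T"
proof
  assume "extends_to_elliptic T"
  then obtain g where g: "elliptic_fun g" and gT: "\<forall>\<^sub>F u in at 0. g u = T u"
    unfolding extends_to_elliptic_def by blast
  define X where "X w = \<delta>_of_T (g w) (deriv g w)" for w
  have "X meromorphic_on UNIV"
    using g unfolding X_def[abs_def] \<delta>_of_T_def elliptic_fun_def by (intro meromorphic_intros) auto
  then have X: "elliptic_fun X"
    unfolding X_def[abs_def] by (rule elliptic_fun_compose_deriv[OF g])
  have X\<delta>: "\<forall>\<^sub>F u in at 0. X u = \<delta> u"
    using gT eventually_deriv_eq_at[OF gT] \<delta>_eq_\<delta>_of_T by eventually_elim (simp add: X_def)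
  have X_nonconst: "\<not> (\<exists>c. \<forall>\<^sub>F u in at 0. X u = c)"
  proof
    assume "\<exists>c. \<forall>\<^sub>F u in at 0. X u = c"
    then obtain c where "\<forall>\<^sub>F u in at 0. X u = c" by blast
    with X\<delta> have "\<forall>\<^sub>F u in at 0. \<delta> u = c"
      by eventually_elim simp
    with \<delta>_not_eventually_constant show False by blast
  qed
  define l where "l = 1 - complex_of_real \<kappa>^2"
  have ode: "\<forall>\<^sub>F u in at 0. 9 * X u^2 * (deriv X u)^2 = 2 * (1 - X u^2) * (4 * X u^3 - 3 * X u + 1 - 2 * l)"
    using X\<delta> eventually_deriv_eq_at[OF X\<delta>] filter_leD[OF at_within_le_nhds \<delta>_ode]
    by eventually_elim (simp add: l_def)
  show False
  proof (cases "l = 1/2")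
    case False
    have "\<forall>\<^sub>F u in at 0. poly [:0, 0, 9:] (X u) * (deriv X u)^2
        = poly ([:2, 0, -2:] * [:1 - 2 * l, -3, 0, 4:]) (X u)"
      using ode by eventually_elim (simp add: algebra_simps power2_eq_square power3_eq_cube)
    from elliptic_fun_poly_ode_zero[OF X X_nonconst this] False show False
      by (simp add: mult.commute)
  next
    case True
    (* here 4 X\<^sup>3 - 3 X + 1 - 2 l = X (4 X\<^sup>2 - 3): both sides vanish at a zero of X, so cancel X first *)
    have "\<forall>\<^sub>F u in at 0. poly [:0, 9:] (X u) * (deriv X u)^2
        = poly ([:2, 0, -2:] * [:-3, 0, 4:]) (X u)"
      using ode X\<delta> filter_leD[OF at_within_le_nhds eventually_nonzero]
    proof eventually_elim
      case (elim u)
      then have "X u * (9 * X u * (deriv X u)^2) = X u * (2 * (1 - X u^2) * (4 * X u^2 - 3))"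
        using True by (simp add: algebra_simps power2_eq_square power3_eq_cube)
      moreover have "X u \<noteq> 0"
        using elim by simp
      ultimately have "9 * X u * (deriv X u)^2 = 2 * (1 - X u^2) * (4 * X u^2 - 3)"
        by (metis mult_left_cancel)
      then show ?case
        by (simp add: algebra_simps power2_eq_square)
    qed
    from elliptic_fun_poly_ode_zero[OF X X_nonconst this] show False
      by simp
  qed
qed

end

theorem theorem12:
  fixes \<kappa> r :: real and \<phi> \<psi> :: "complex \<Rightarrow> complex"
  assumes \<kappa>: "0 < \<kappa>" "\<kappa> < 1"
    and r: "r > 0"
    and \<phi>_hol: "\<phi> holomorphic_on ball 0 r" and \<phi>0: "\<phi> 0 = 0"
    and \<phi>_inv: "\<forall>u\<in>ball 0 r.
       contour_integral (linepath 0 (sin (\<phi> u)))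
         (\<lambda>t. hyp2f1 (1/6) (5/6) (1/2) (complex_of_real (\<kappa>^2) * t^2) / csqrt (1 - t^2)) = u"
    and \<psi>_hol: "\<psi> holomorphic_on ball 0 r" and \<psi>0: "\<psi> 0 = 0"
    and \<psi>_sin: "\<forall>u\<in>ball 0 r. sin (\<psi> u) = complex_of_real \<kappa> * sin (\<phi> u)"
  defines "lam \<equiv> sqrt (1 - \<kappa>^2)"
    and "T \<equiv> (\<lambda>u. (sin (\<phi> u))^2 / (cos (\<phi> u))^2)"
    and "t \<equiv> (\<lambda>u. sin (\<phi> u) / cos (\<phi> u))"
    and "Nab \<equiv> (\<lambda>u. (cos (2/3 * \<psi> u))^2)"
  shows "(\<exists>\<epsilon>>0. \<forall>u\<in>ball 0 \<epsilon>.
            Nab u * (deriv T u)^2 = 4 * T u * (1 + T u) * (1 + complex_of_real (lam^2) * T u))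
         \<and> \<not> extends_to_elliptic T \<and> \<not> extends_to_elliptic t"
proof -
  interpret H: hyp2f1_integral_inverse \<kappa> r \<phi> \<psi>
    using \<kappa> r \<phi>_hol \<phi>0 \<phi>_inv \<psi>_hol \<psi>0 \<psi>_sin by unfold_locales auto
  have T: "T = H.T" and Nab: "Nab = (\<lambda>u. H.\<delta> u ^ 2)"
    by (simp_all add: T_def Nab_def H.T_def H.\<delta>_def fun_eq_iff)
  have "complex_of_real (lam^2) = 1 - complex_of_real \<kappa>^2"
    using \<kappa> by (simp add: lam_def power_le_one)
  then obtain \<epsilon> where "\<epsilon> > 0"
    and "\<forall>u. dist u 0 < \<epsilon> \<longrightarrow>
      Nab u * (deriv T u)^2 = 4 * T u * (1 + T u) * (1 + complex_of_real (lam^2) * T u)"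
    using H.T_ode unfolding T Nab eventually_nhds_metric by auto
  then have ode: "\<exists>\<epsilon>>0. \<forall>u\<in>ball 0 \<epsilon>.
      Nab u * (deriv T u)^2 = 4 * T u * (1 + T u) * (1 + complex_of_real (lam^2) * T u)"
    by (auto simp: dist_commute)
  have "\<not> extends_to_elliptic T"
    unfolding T by (rule H.not_extends_to_elliptic_T)
  moreover have "\<not> extends_to_elliptic t"
  proof
    assume "extends_to_elliptic t"
    then have "extends_to_elliptic (\<lambda>u. t u ^ 2)"
      by (rule extends_to_elliptic_power)
    then show False
      using \<open>\<not> extends_to_elliptic T\<close> by (simp add: t_def T_def power_divide)
  qed
  ultimately show ?thesis
    using ode by blast
qed

end
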